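(* Let $n \ge 1$ and let $S \subset \mathbb{C}^n$ be a unitary 2-design with $s = |S|$ elements. Then the tensor rank (over $\mathbb{C}$) of the matrix multiplication tensor $\mathrm{MM}_n$ is at most $s(s-1)(s-2)+1$.
   Context: For $u, v \in \mathbb{C}^n$, $|u\rangle\langle v|$ denotes the $n\times n$ matrix whose $(i,j)$ entry is $u_i \overline{v_j}$. Let $e_1,\dots,e_n$ be the standard basis of $\mathbb{C}^n$ and $E_{ab} = |e_a\rangle\langle e_b|$. The matrix multiplication tensor is $\mathrm{MM}_n = \sum_{a,b,c=1}^n E_{ab}\otimes E_{bc}\otimes E_{ca} \in \mathbb{C}^{n\times n}\otimes\mathbb{C}^{n\times n}\otimes\mathbb{C}^{n\times n}$ (equivalently, the tensor with $\langle \mathrm{MM}_n, A\otimes B\otimes C\rangle = \operatorname{tr}(ABC)$). The tensor rank of a tensor $T \in V_1\otimes V_2\otimes V_3$ is the least number $r$ such that $T$ is a sum of $r$ tensors of the form $x\otimes y\otimes z$ with $x\in V_1, y\in V_2, z \in V_3$. A finite set $S = \{w_1,\dots,w_s\} \subset \mathbb{C}^n$ is a unitary 2-design if $\sum_{i=1}^s w_i = 0$ and $\frac{1}{s}\sum_{i=1}^s |w_i\rangle\langle w_i| = \frac{1}{n}\mathbf{1}$, where $\mathbf{1}$ is the $n\times n$ identity matrix. *)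

theory Defs
  imports "HOL-Analysis.Analysis"
begin

text \<open>Vectors of C^n are complex^'n, n = CARD('n). n x n matrices are complex^'n^'n.
  A tensor in C^{nxn} (x) C^{nxn} (x) C^{nxn} is represented by its coordinates
  T a b c d e f = coefficient of E_ab (x) E_cd (x) E_ef.\<close>

type_synonym 'n tensor3 = "'n \<Rightarrow> 'n \<Rightarrow> 'n \<Rightarrow> 'n \<Rightarrow> 'n \<Rightarrow> 'n \<Rightarrow> complex"

definition outer :: "complex^'n \<Rightarrow> complex^'n \<Rightarrow> complex^'n^'n" where
  "outer u v = (\<chi> i j. u $ i * cnj (v $ j))"

definition unitary_2_design :: "(complex^'n) set \<Rightarrow> bool" where
  "unitary_2_design S \<longleftrightarrow> finite S \<and> (\<Sum>w\<in>S. w) = 0 \<and>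
     (1 / real (card S)) *\<^sub>R (\<Sum>w\<in>S. outer w w) = (1 / real CARD('n)) *\<^sub>R (mat 1 :: complex^'n^'n)"

definition rank_one :: "complex^'n^'n \<Rightarrow> complex^'n^'n \<Rightarrow> complex^'n^'n \<Rightarrow> 'n tensor3" where
  "rank_one x y z = (\<lambda>a b c d e f. x $ a $ b * y $ c $ d * z $ e $ f)"

definition tensor_rank :: "('n::finite) tensor3 \<Rightarrow> nat" where
  "tensor_rank T = (LEAST r. \<exists>x y z :: nat \<Rightarrow> complex^'n^'n.
      T = (\<lambda>a b c d e f. \<Sum>t<r. rank_one (x t) (y t) (z t) a b c d e f))"

text \<open>MM_n = sum_{a,b,c} E_ab (x) E_bc (x) E_ca.\<close>
definition MM :: "'n tensor3" where
  "MM = (\<lambda>a b c d e f. if b = c \<and> d = e \<and> f = a then 1 else 0)"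

end

theory Submission
  imports Defs
begin

text \<open>For \<open>u, v \<in> S\<close> let \<open>F(u,v)\<close> be the matrix with entries \<open>conj(u\<^sub>a) (u\<^sub>b - v\<^sub>b)\<close>.
  Expanding the cyclic sum \<open>\<Sum>\<^bsub>u,v,w \<in> S\<^esub> F(u,v) \<otimes> F(v,w) \<otimes> F(w,u)\<close> entrywise gives eight
  products of moments; since \<open>\<Sum> w = 0\<close>, every product in which some summation variable occurs
  only through \<open>conj(w\<^sub>i)\<close> vanishes, and the two surviving ones are products of second moments,
  which the design property makes equal to \<open>(s/n) \<delta>\<close>. The cyclic sum is therefore
  \<open>(s/n)\<^sup>3 (1 \<otimes> 1 \<otimes> 1 - MM\<^sub>n)\<close>. As \<open>F(u,u) = 0\<close>, only triples of distinct vectors contribute,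
  so \<open>MM\<^sub>n\<close> is \<open>1 \<otimes> 1 \<otimes> 1\<close> plus \<open>s(s-1)(s-2)\<close> rank-one tensors.\<close>

definition design_factor :: "complex^'n \<Rightarrow> complex^'n \<Rightarrow> complex^'n^'n" where
  "design_factor u v = (\<chi> a b. cnj (u $ a) * (u $ b - v $ b))"

lemma design_factor_self [simp]: "design_factor u u = 0"
  by (simp add: design_factor_def vec_eq_iff)

definition distinct_triples :: "'a set \<Rightarrow> ('a \<times> 'a \<times> 'a) set" where
  "distinct_triples S = (SIGMA u:S. SIGMA v:S - {u}. S - {u, v})"

lemma card_distinct_triples:
  assumes "finite S"
  shows "card (distinct_triples S) = card S * (card S - 1) * (card S - 2)"
proof -
  have "card (distinct_triples S) = (\<Sum>u\<in>S. \<Sum>v\<in>S - {u}. card (S - {u, v}))"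
    unfolding distinct_triples_def using assms by simp
  also have "\<dots> = (\<Sum>u\<in>S. \<Sum>v\<in>S - {u}. card S - 2)"
    using assms by (intro sum.cong refl) (auto simp: card_Diff_subset card_insert_if)
  also have "\<dots> = card S * (card S - 1) * (card S - 2)"
    using assms by (simp add: card_Diff_singleton_if)
  finally show ?thesis .
qed

lemma tensor_rank_le_card:
  fixes T :: "('n::finite) tensor3"
  assumes "finite I"
    and T: "T = (\<lambda>a b c d e f. \<Sum>t\<in>I. rank_one (x t) (y t) (z t) a b c d e f)"
  shows "tensor_rank T \<le> card I"
proof -
  obtain h where h: "bij_betw h {..<card I} I"
    using ex_bij_betw_nat_finite[OF assms(1)] by (auto simp: atLeast0LessThan)
  have "T = (\<lambda>a b c d e f. \<Sum>t<card I. rank_one ((x \<circ> h) t) ((y \<circ> h) t) ((z \<circ> h) t) a b c d e f)"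
    unfolding T comp_apply by (intro ext) (rule sum.reindex_bij_betw[OF h, symmetric])
  then show ?thesis
    unfolding tensor_rank_def by (intro Least_le exI)
qed

lemma tensor_rank_rank_one_add_le:
  fixes T :: "('n::finite) tensor3"
  assumes "finite I"
    and T: "T = (\<lambda>a b c d e f. rank_one x0 y0 z0 a b c d e f +
                   (\<Sum>t\<in>I. rank_one (x t) (y t) (z t) a b c d e f))"
  shows "tensor_rank T \<le> card I + 1"
proof -
  let ?J = "insert None (Some ` I)"
  have decomposition: "T = (\<lambda>a b c d e f. \<Sum>t\<in>?J.
      rank_one (case_option x0 x t) (case_option y0 y t) (case_option z0 z t) a b c d e f)"
    unfolding T using assms(1) by (simp add: sum.reindex)
  have "card ?J = card I + 1"
    using assms(1) by (simp add: card_image)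
  then show ?thesis
    using tensor_rank_le_card[OF _ decomposition] assms(1) by simp
qed

lemma unitary_2_design_sum_cnj:
  assumes "unitary_2_design S"
  shows "(\<Sum>w\<in>S. cnj (w $ a)) = 0"
proof -
  have "(\<Sum>w\<in>S. w $ a) = 0"
    using assms unfolding unitary_2_design_def by (simp flip: sum_component)
  then have "cnj (\<Sum>w\<in>S. w $ a) = 0"
    by simp
  then show ?thesis
    by simp
qed

lemma unitary_2_design_card_nonzero:
  fixes S :: "(complex^'n) set"
  assumes "unitary_2_design S"
  shows "card S \<noteq> 0"
proof
  assume "card S = 0"
  then have "(1 / real CARD('n)) *\<^sub>R (mat 1 :: complex^'n^'n) = 0"
    using assms unfolding unitary_2_design_def by simp
  then have "(mat 1 :: complex^'n^'n) $ undefined $ undefined = 0"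
    by simp
  then show False
    by (simp add: mat_def)
qed

lemma unitary_2_design_second_moment:
  fixes S :: "(complex^'n) set"
  assumes "unitary_2_design S"
  shows "(\<Sum>w\<in>S. cnj (w $ a) * w $ b) =
    of_real (real (card S) / real CARD('n)) * (if a = b then 1 else 0)"
proof -
  have design: "(1 / real (card S)) *\<^sub>R (\<Sum>w\<in>S. outer w w) =
      (1 / real CARD('n)) *\<^sub>R (mat 1 :: complex^'n^'n)"
    using assms unfolding unitary_2_design_def by blast
  have "(\<Sum>w\<in>S. cnj (w $ a) * w $ b) = real (card S) *\<^sub>R
      (((1 / real (card S)) *\<^sub>R (\<Sum>w\<in>S. outer w w)) $ b $ a)"
    using unitary_2_design_card_nonzero[OF assms] by (simp add: outer_def vector_scaleR_component mult.commute)
  also have "\<dots> = of_real (real (card S) / real CARD('n)) * (if a = b then 1 else 0)"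
    unfolding design vector_scaleR_component by (simp add: mat_def scaleR_conv_of_real)
  finally show ?thesis .
qed

lemma sum_sum_sum_mult:
  fixes p q r :: "'a \<Rightarrow> 'b::comm_semiring_0"
  shows "(\<Sum>u\<in>S. \<Sum>v\<in>S. \<Sum>w\<in>S. p u * q v * r w) = sum p S * sum q S * sum r S"
proof -
  have "(\<Sum>u\<in>S. \<Sum>v\<in>S. \<Sum>w\<in>S. p u * q v * r w) = (\<Sum>u\<in>S. p u * (\<Sum>v\<in>S. q v * sum r S))"
    by (simp add: sum_distrib_left mult.assoc)
  then show ?thesis
    by (simp add: sum_distrib_right mult.assoc)
qed

lemma sum_cyclic_design_factors:
  fixes S :: "(complex^'n) set" and k :: complex
  assumes sum_cnj: "\<And>i. (\<Sum>w\<in>S. cnj (w $ i)) = 0"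
    and second_moment: "\<And>i j. (\<Sum>w\<in>S. cnj (w $ i) * w $ j) = k * (if i = j then 1 else 0)"
  shows "(\<Sum>u\<in>S. \<Sum>v\<in>S. \<Sum>w\<in>S.
      rank_one (design_factor u v) (design_factor v w) (design_factor w u) a b c d e f) =
    k ^ 3 * (rank_one (mat 1) (mat 1) (mat 1) a b c d e f - MM a b c d e f)"
proof -
  have expand: "rank_one (design_factor u v) (design_factor v w) (design_factor w u) a b c d e f
      = (cnj (u$a) * u$b) * (cnj (v$c) * v$d) * (cnj (w$e) * w$f)
      - (cnj (u$a) * u$b * u$f) * (cnj (v$c) * v$d) * cnj (w$e)
      - (cnj (u$a) * u$b) * cnj (v$c) * (cnj (w$e) * w$d * w$f)
      + (cnj (u$a) * u$b * u$f) * cnj (v$c) * (cnj (w$e) * w$d)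
      - cnj (u$a) * (cnj (v$c) * v$b * v$d) * (cnj (w$e) * w$f)
      + (cnj (u$a) * u$f) * (cnj (v$c) * v$b * v$d) * cnj (w$e)
      + cnj (u$a) * (cnj (v$c) * v$b) * (cnj (w$e) * w$d * w$f)
      - (cnj (u$a) * u$f) * (cnj (v$c) * v$b) * (cnj (w$e) * w$d)" for u v w :: "complex^'n"
    by (simp add: rank_one_def design_factor_def algebra_simps)
  have "(\<Sum>u\<in>S. \<Sum>v\<in>S. \<Sum>w\<in>S.
      rank_one (design_factor u v) (design_factor v w) (design_factor w u) a b c d e f) =
      (\<Sum>w\<in>S. cnj (w$a) * w$b) * (\<Sum>w\<in>S. cnj (w$c) * w$d) * (\<Sum>w\<in>S. cnj (w$e) * w$f)
    - (\<Sum>w\<in>S. cnj (w$a) * w$f) * (\<Sum>w\<in>S. cnj (w$c) * w$b) * (\<Sum>w\<in>S. cnj (w$e) * w$d)"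
    unfolding expand sum.distrib sum_subtractf sum_sum_sum_mult sum_cnj by simp
  also have "\<dots> = k ^ 3 * (rank_one (mat 1) (mat 1) (mat 1) a b c d e f - MM a b c d e f)"
    unfolding second_moment
    by (simp add: rank_one_def MM_def mat_def power3_eq_cube eq_commute[of a])
  finally show ?thesis .
qed

lemma rank_one_scaleR_left:
  "rank_one (r *\<^sub>R x) y z a b c d e f = of_real r * rank_one x y z a b c d e f"
  unfolding rank_one_def vector_scaleR_component by (simp add: scaleR_conv_of_real)

lemma MM_eq_design_decomposition:
  fixes S :: "(complex^'n) set"
  assumes "unitary_2_design S"
  defines "k \<equiv> real (card S) / real CARD('n)"
  shows "MM = (\<lambda>a b c d e f. rank_one (mat 1) (mat 1) (mat 1) a b c d e f +
    (\<Sum>(u, v, w)\<in>distinct_triples S.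
      rank_one ((- 1 / k ^ 3) *\<^sub>R design_factor u v) (design_factor v w) (design_factor w u)
        a b c d e f))"
proof (intro ext)
  fix a b c d e f :: 'n
  have "finite S"
    using assms(1) unfolding unitary_2_design_def by blast
  have "k \<noteq> 0"
    using unitary_2_design_card_nonzero[OF assms(1)] by (simp add: k_def)
  let ?R = "\<lambda>u v w. rank_one (design_factor u v) (design_factor v w) (design_factor w u) a b c d e f"
  have "(\<Sum>(u, v, w)\<in>distinct_triples S.
      rank_one ((- 1 / k ^ 3) *\<^sub>R design_factor u v) (design_factor v w) (design_factor w u)
        a b c d e f) = of_real (- 1 / k ^ 3) * (\<Sum>(u, v, w)\<in>S \<times> S \<times> S. ?R u v w)"
    unfolding rank_one_scaleR_left sum_distrib_left case_prod_beta
    by (rule sum.mono_neutral_left)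
      (use \<open>finite S\<close> in \<open>auto simp: distinct_triples_def rank_one_def\<close>)
  also have "\<dots> = of_real (- 1 / k ^ 3) * (\<Sum>u\<in>S. \<Sum>v\<in>S. \<Sum>w\<in>S. ?R u v w)"
    by (simp add: sum.cartesian_product)
  also have "\<dots> = MM a b c d e f - rank_one (mat 1) (mat 1) (mat 1) a b c d e f"
    using \<open>k \<noteq> 0\<close>
      sum_cyclic_design_factors[OF unitary_2_design_sum_cnj[OF assms(1)]
        unitary_2_design_second_moment[OF assms(1), folded k_def]]
    by (simp add: field_simps)
  finally show "MM a b c d e f = rank_one (mat 1) (mat 1) (mat 1) a b c d e f +
    (\<Sum>(u, v, w)\<in>distinct_triples S.
      rank_one ((- 1 / k ^ 3) *\<^sub>R design_factor u v) (design_factor v w) (design_factor w u)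
        a b c d e f)"
    by simp
qed

theorem theorem1:
  fixes S :: "(complex^'n) set"
  assumes "unitary_2_design S"
  shows "tensor_rank (MM :: 'n tensor3) \<le> card S * (card S - 1) * (card S - 2) + 1"
proof -
  have "finite S"
    using assms unfolding unitary_2_design_def by blast
  define k where "k = real (card S) / real CARD('n)"
  have "tensor_rank (MM :: 'n tensor3) \<le> card (distinct_triples S) + 1"
    using MM_eq_design_decomposition[OF assms]
    by (intro tensor_rank_rank_one_add_le[where
          x = "\<lambda>(u, v, w). (- 1 / k ^ 3) *\<^sub>R design_factor u v" and
          y = "\<lambda>(u, v, w). design_factor v w" and z = "\<lambda>(u, v, w). design_factor w u"])
      (auto simp: distinct_triples_def k_def \<open>finite S\<close> case_prod_beta)
  then show ?thesis
    using card_distinct_triples[OF \<open>finite S\<close>] by simp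
qed

end
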